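(* Let $u,i,v,j\in\mathbb{Z}_n$ with $\alpha=\dim L(u,i)\leqslant\beta=\dim L(v,j)$. Let $h\in L(u,i)$ and $h'\in L(v,j)$ be nonzero vectors annihilated by $X$ (so $e_ih=h$, $e_jh'=h'$). Then the elements $z_{s,t}=\gamma_i^sh\otimes\gamma_j^th'$ ($0\leqslant s\leqslant\alpha-1$, $0\leqslant t\leqslant\beta-1$) form a basis of $L(u,i)\otimes L(v,j)$. Grading $L(u,i)\otimes L(v,j)$ by $\deg z_{s,t}=s+t$, the kernel of the action of $X$ on $L(u,i)\otimes L(v,j)$ has dimension $\alpha$ and is spanned by elements $x_\theta$, $0\leqslant\theta\leqslant\alpha-1$, with $x_\theta$ homogeneous of degree $\theta$ (one element up to scalars in each such degree).
   Context: $k$ is an algebraically closed field; $n,d$ integers with $d\geqslant2$, $d\mid n$, $\mathrm{char}\,k\nmid n$; $q$ a primitive $d$-th root of unity. $\Lambda_{n,d}$ is the path algebra of the cyclic quiver with vertices $e_i$ and arrows $a_i:e_i\to e_{i+1}$ ($i\in\mathbb{Z}_n$) modulo all paths of length $d$; $\gamma_i^m=a_{i+m-1}\cdots a_i$, $\gamma_i^0=e_i$. $\mathcal{D}(\Lambda_{n,d})$ is the Drinfel'd double of the Hopf algebra $\Lambda_{n,d}$; concretely it is generated by $G,X,e_i,a_i$ with relations $G^n=1$, $X^d=0$, $GX=q^{-1}XG$, products of paths as in $\Lambda_{n,d}$, $\gamma_\ell^mG=q^{-m}G\gamma_\ell^m$, $\gamma_\ell^mX=q^{-m}X\gamma_{\ell+1}^m-q^{-m}(m)_q\gamma_{\ell+1}^{m-1}+q^{\ell+1-m}(m)_qG\gamma_{\ell+1}^{m-1}$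 ($(m)_q=1+\cdots+q^{m-1}$), with comultiplication $\Delta(G)=G\otimes G$, $\Delta(X)=X\otimes G+1\otimes X$, $\Delta(e_i)=\sum_{s+t=i}e_s\otimes e_t$, $\Delta(a_i)=\sum_{s+t=i}(e_s\otimes a_t+q^ta_s\otimes e_t)$; tensor products of modules are over $k$ with action via $\Delta$. $E_u=\frac1n\sum_{i,j}q^{-i(u+j)}G^ie_j$. For an integer $r$, $\overline r^-\in\{0,\dots,d-1\}$ is its residue mod $d$. $L(u,j)$ is the simple module (unique up to isomorphism) of dimension $d-\overline{2j+u-1}^-$ on which $E_u$ acts as the identity and whose kernel of $X$ is one-dimensional, spanned by a vector $Y$ with $e_jY=Y$. *)

theory Defs
  imports "HOL-Analysis.Analysis" "HOL-Computational_Algebra.Polynomial"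
begin

(* Finite-dimensional modules are modelled concretely: a module of dimension CARD('p)
   is the coordinate space 'a^'p, and each generator of the Drinfel'd double acts by a
   matrix in 'a^'p^'p. Indices in Z_n are integers, with n-periodic families. *)

type_synonym ('a,'p) sqmat = "'a^'p^'p"

primrec mpow :: "('a::semiring_1,'p::finite) sqmat \<Rightarrow> nat \<Rightarrow> ('a,'p) sqmat" where
  "mpow A 0 = mat 1"
| "mpow A (Suc m) = A ** mpow A m"

primrec gam :: "(int \<Rightarrow> ('a::semiring_1,'p::finite) sqmat) \<Rightarrow> (int \<Rightarrow> ('a,'p) sqmat)
                 \<Rightarrow> int \<Rightarrow> nat \<Rightarrow> ('a,'p) sqmat" where
  "gam e a l 0 = e l"
| "gam e a l (Suc m) = a (l + int m) ** gam e a l m"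

definition qint :: "'a::field \<Rightarrow> nat \<Rightarrow> 'a" where
  "qint q m = (\<Sum>k<m. q ^ k)"

(* a representation of D(Lambda_{n,d}) on 'a^'p, given by the actions of G, X, e_l, a_l *)
definition drep :: "nat \<Rightarrow> nat \<Rightarrow> 'a::field \<Rightarrow> ('a,'p::finite) sqmat \<Rightarrow> ('a,'p) sqmat
      \<Rightarrow> (int \<Rightarrow> ('a,'p) sqmat) \<Rightarrow> (int \<Rightarrow> ('a,'p) sqmat) \<Rightarrow> bool" where
  "drep n d q G X e a \<longleftrightarrow>
     (\<forall>l. e (l + int n) = e l \<and> a (l + int n) = a l) \<and>
     mpow G n = mat 1 \<and>
     mpow X d = 0 \<and>
     G ** X = mat (inverse q) ** (X ** G) \<and>
     (\<forall>l l'. e l ** e l' = (if l mod int n = l' mod int n then e l else 0)) \<and>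
     (\<Sum>l\<in>{0..<int n}. e l) = mat 1 \<and>
     (\<forall>l. e (l + 1) ** a l = a l \<and> a l ** e l = a l) \<and>
     (\<forall>l. gam e a l d = 0) \<and>
     (\<forall>l m. m < d \<longrightarrow> gam e a l m ** G = mat (inverse q ^ m) ** (G ** gam e a l m)) \<and>
     (\<forall>l m. m < d \<longrightarrow>
        gam e a l m ** X =
          mat (inverse q ^ m) ** (X ** gam e a (l + 1) m)
          - mat (inverse q ^ m * qint q m) ** gam e a (l + 1) (m - 1)
          + mat (q powi (l + 1 - int m) * qint q m) ** (G ** gam e a (l + 1) (m - 1)))"

definition Eidem :: "nat \<Rightarrow> 'a::field \<Rightarrow> int \<Rightarrow> ('a,'p::finite) sqmat
      \<Rightarrow> (int \<Rightarrow> ('a,'p) sqmat) \<Rightarrow> ('a,'p) sqmat" where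
  "Eidem n q u G e =
     mat (inverse (of_nat n)) **
       (\<Sum>i<n. \<Sum>j\<in>{0..<int n}. mat (q powi (- (int i * (u + j)))) ** (mpow G i ** e j))"

definition dsimple :: "('a::field,'p::finite) sqmat \<Rightarrow> ('a,'p) sqmat
      \<Rightarrow> (int \<Rightarrow> ('a,'p) sqmat) \<Rightarrow> (int \<Rightarrow> ('a,'p) sqmat) \<Rightarrow> bool" where
  "dsimple G X e a \<longleftrightarrow>
     (\<forall>W. vec.subspace W \<and>
          (\<forall>w\<in>W. G *v w \<in> W \<and> X *v w \<in> W \<and> (\<forall>l. e l *v w \<in> W \<and> a l *v w \<in> W))
          \<longrightarrow> W = {0} \<or> W = UNIV)"

definition isL :: "nat \<Rightarrow> nat \<Rightarrow> 'a::field \<Rightarrow> int \<Rightarrow> int \<Rightarrow> ('a,'p::finite) sqmat \<Rightarrow> ('a,'p) sqmat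
      \<Rightarrow> (int \<Rightarrow> ('a,'p) sqmat) \<Rightarrow> (int \<Rightarrow> ('a,'p) sqmat) \<Rightarrow> bool" where
  "isL n d q u j G X e a \<longleftrightarrow>
     drep n d q G X e a \<and> dsimple G X e a \<and>
     int CARD('p) = int d - (2 * j + u - 1) mod int d \<and>
     Eidem n q u G e = mat 1 \<and>
     (\<exists>Y. Y \<noteq> 0 \<and> e j *v Y = Y \<and> {v. X *v v = 0} = vec.span {Y})"

definition kron :: "('a::semiring_1,'p::finite) sqmat \<Rightarrow> ('a,'r::finite) sqmat \<Rightarrow> ('a, 'p \<times> 'r) sqmat" where
  "kron A B = (\<chi> ik jl. A $ fst ik $ fst jl * B $ snd ik $ snd jl)"

definition vtens :: "'a::semiring_1^'p::finite \<Rightarrow> 'a^'r::finite \<Rightarrow> 'a^('p \<times> 'r)" where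
  "vtens v w = (\<chi> ik. v $ fst ik * w $ snd ik)"

(* Delta(X) = X (x) G + 1 (x) X acting on V (x) W *)
definition tensX :: "('a::semiring_1,'p::finite) sqmat \<Rightarrow> ('a,'p) sqmat \<Rightarrow> ('a,'r::finite) sqmat
      \<Rightarrow> ('a,'r) sqmat \<Rightarrow> ('a,'p \<times> 'r) sqmat" where
  "tensX X1 G1 X2 G2 = kron X1 G2 + kron (mat 1) X2"

end

theory Submission
  imports Defs
begin

(* The vectors gh s = gamma_i^s h of a simple module span a nonzero submodule, hence the whole
   module, and lie in the distinct eigenspaces of the idempotents e_(i+s) (s < d <= n), so the
   nonzero ones form a basis.  G acts on them diagonally, and X maps gh (s+1) to a multiple of
   gh s which is nonzero as long as gh (s+1) is, because ker X is spanned by h.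

   Hence Delta(X) = X (x) G + 1 (x) X maps z s t to a combination of z (s-1) t and z s (t-1)
   with nonzero coefficients.  For such an operator on an alpha x beta grid with alpha <= beta,
   the kernel equations, solved along antidiagonals, force every coefficient with s + t >= alpha
   to vanish and determine all others from the free coefficients in the row s = 0.  This leaves
   exactly one kernel vector in each degree theta < alpha. *)

lemma matrix_vector_mult_sum: "(M::'a::field^'m^'n) *v (\<Sum>i\<in>I. f i) = (\<Sum>i\<in>I. M *v f i)"
  by (induction I rule: infinite_finite_induct) (auto simp: matrix_vector_right_distrib)

lemma mat_matrix_vector_mult: "mat (c::'a::field) *v v = c *s v"
  by (simp add: mat_def matrix_vector_mult_def vector_scalar_mult_def vec_eq_iff
      if_distrib[of "\<lambda>x. x * _"] sum.delta cong: if_cong)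

lemma scale_power_inverse_cancel: "(x::'a::field) \<noteq> 0 \<Longrightarrow> x ^ m *s (inverse x ^ m *s v) = v"
  by (simp add: vec.scale_scale flip: power_mult_distrib)

lemma subspace_matrix_kernel: "vec.subspace {x. (M::'a::field^'m^'n) *v x = 0}"
  by (auto simp: vec.subspace_def matrix_vector_right_distrib vector_scalar_commute)

lemma matrix_vector_mult_span_invariant:
  assumes "\<And>x. x \<in> S \<Longrightarrow> M *v x \<in> vec.span S" and "w \<in> vec.span S"
  shows "M *v w \<in> vec.span S"
  using assms(2)
proof (induction rule: vec.span_induct_alt)
  case (step c x y)
  then show ?case
    using assms(1)[of x]
    by (simp add: matrix_vector_right_distrib vector_scalar_commute vec.span_add vec.span_scale)
qed (simp add: vec.span_zero)

lemma spanning_family_card_eq_dim_imp_basis: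
  fixes b :: "'i \<Rightarrow> 'a::field ^ 'n"
  assumes "finite I" "card I = CARD('n)" "vec.span (b ` I) = UNIV"
  shows "inj_on b I" and "vec.independent (b ` I)"
proof -
  have "CARD('n) \<le> card (b ` I)"
    using vec.span_card_ge_dim[of "b ` I" UNIV] assms by (simp add: card_cart_basis)
  then have card_image: "card (b ` I) = card I"
    using card_image_le[OF assms(1), of b] assms(2) by simp
  then show "inj_on b I"
    by (rule eq_card_imp_inj_on[OF assms(1)])
  show "vec.independent (b ` I)"
    using assms card_image
    by (intro vec.card_le_dim_spanning[of _ UNIV]) (simp_all add: card_cart_basis)
qed

lemma sum_lessThan_shift_down:
  fixes f :: "nat \<Rightarrow> 'b::comm_monoid_add"
  shows "(\<Sum>s<m. if s = 0 then 0 else f (s - 1)) = (\<Sum>s<m. if s + 1 < m then f s else 0)"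
proof (cases m)
  case (Suc m')
  have "(\<Sum>s<Suc m'. if s = 0 then 0 else f (s - 1)) = (\<Sum>s<m'. f s)"
    by (subst sum.lessThan_Suc_shift) simp
  also have "\<dots> = (\<Sum>s<Suc m'. if s + 1 < Suc m' then f s else 0)"
    by (simp add: sum.lessThan_Suc)
  finally show ?thesis
    using Suc by simp
qed simp

lemma add_mod_eq_imp_eq:
  fixes i :: int
  assumes "(i + int s) mod int n = (i + int s') mod int n" "s < n" "s' < n"
  shows "s = s'"
proof -
  have "int n dvd int s - int s'"
    using assms(1) by (simp add: mod_eq_dvd_iff)
  then have "s mod n = s' mod n"
    by (metis mod_eq_dvd_iff of_nat_mod of_nat_eq_iff)
  then show ?thesis
    using assms(2,3) by simp
qed

section \<open>Operators lowering a grid basis\<close>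

locale grid_lowering =
  fixes z :: "nat \<Rightarrow> nat \<Rightarrow> 'a::field ^ 'm" and T :: "'a ^ 'm ^ 'm"
    and A B :: "nat \<Rightarrow> nat \<Rightarrow> 'a" and \<alpha> \<beta> :: nat
  assumes rows_le_columns: "\<alpha> \<le> \<beta>"
    and z_inj: "inj_on (\<lambda>(s, t). z s t) ({..<\<alpha>} \<times> {..<\<beta>})"
    and z_independent: "vec.independent ((\<lambda>(s, t). z s t) ` ({..<\<alpha>} \<times> {..<\<beta>}))"
    and z_span: "vec.span ((\<lambda>(s, t). z s t) ` ({..<\<alpha>} \<times> {..<\<beta>})) = UNIV"
    and T_z: "\<And>s t. s < \<alpha> \<Longrightarrow> t < \<beta> \<Longrightarrow> T *v z s t =
       (if s = 0 then 0 else A s t *s z (s - 1) t) + (if t = 0 then 0 else B s t *s z s (t - 1))"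
    and A_nonzero: "\<And>s t. 0 < s \<Longrightarrow> s < \<alpha> \<Longrightarrow> t < \<beta> \<Longrightarrow> A s t \<noteq> 0"
    and B_nonzero: "\<And>s t. 0 < t \<Longrightarrow> s < \<alpha> \<Longrightarrow> t < \<beta> \<Longrightarrow> B s t \<noteq> 0"
begin

definition comb :: "(nat \<Rightarrow> nat \<Rightarrow> 'a) \<Rightarrow> 'a ^ 'm" where
  "comb c = (\<Sum>s<\<alpha>. \<Sum>t<\<beta>. c s t *s z s t)"

definition homogeneous :: "nat \<Rightarrow> ('a ^ 'm) set" where
  "homogeneous \<theta> = vec.span {z s t | s t. s < \<alpha> \<and> t < \<beta> \<and> s + t = \<theta>}"

lemma comb_cong: "(\<And>s t. s < \<alpha> \<Longrightarrow> t < \<beta> \<Longrightarrow> c s t = c' s t) \<Longrightarrow> comb c = comb c'"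
  by (simp add: comb_def)

lemma comb_zero: "comb (\<lambda>s t. 0) = 0"
  by (simp add: comb_def)

lemma comb_add: "comb (\<lambda>s t. c s t + c' s t) = comb c + comb c'"
  by (simp add: comb_def vec.scale_left_distrib sum.distrib)

lemma comb_diff: "comb (\<lambda>s t. c s t - c' s t) = comb c - comb c'"
  by (simp add: comb_def vec.scale_left_diff_distrib sum_subtractf)

lemma comb_scale: "comb (\<lambda>s t. k * c s t) = k *s comb c"
  by (simp add: comb_def vec.scale_sum_right)

lemma comb_sum: "comb (\<lambda>s t. \<Sum>i<(m::nat). k i * c i s t) = (\<Sum>i<m. k i *s comb (c i))"
  by (induction m) (simp_all add: comb_zero comb_add comb_scale)

lemma comb_delta:
  assumes "s < \<alpha>" "t < \<beta>"
  shows "comb (\<lambda>s' t'. if s' = s \<and> t' = t then 1 else 0) = z s t"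
proof -
  have "(if s' = s \<and> t' = t then 1 else 0) *s z s' t' = (if t' = t then if s' = s then z s t else 0 else 0)"
    for s' t'
    by simp
  then show ?thesis
    using assms by (simp add: comb_def sum.delta)
qed

lemma sum_basis_eq_comb:
  "(\<Sum>v\<in>(\<lambda>(s, t). z s t) ` ({..<\<alpha>} \<times> {..<\<beta>}). f v *s v) = comb (\<lambda>s t. f (z s t))"
  by (subst sum.reindex[OF z_inj]) (simp_all add: comb_def sum.cartesian_product case_prod_beta)

lemma ex_comb: "\<exists>c. w = comb c"
proof -
  have "w \<in> vec.span ((\<lambda>(s, t). z s t) ` ({..<\<alpha>} \<times> {..<\<beta>}))"
    using z_span by simp
  then show ?thesis
    by (auto simp: vec.span_finite sum_basis_eq_comb)
qed

lemma comb_eq_0_imp_coeff_0: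
  assumes "comb c = 0" "s < \<alpha>" "t < \<beta>"
  shows "c s t = 0"
proof -
  let ?I = "{..<\<alpha>} \<times> {..<\<beta>}" and ?z = "\<lambda>(s, t). z s t"
  define f where "f v = case_prod c (inv_into ?I ?z v)" for v
  have f_z: "f (z s t) = c s t" if "s < \<alpha>" "t < \<beta>" for s t
    using inv_into_f_f[OF z_inj, of "(s, t)"] that by (simp add: f_def)
  have "(\<Sum>v\<in>?z ` ?I. f v *s v) = 0"
    unfolding sum_basis_eq_comb using assms(1) by (simp add: f_z cong: comb_cong)
  moreover have "z s t \<in> ?z ` ?I"
    using assms(2,3) by auto
  ultimately show ?thesis
    using z_independent f_z[OF assms(2,3)] by (auto simp: vec.independent_explicit)
qed

lemma comb_eq_imp_coeff_eq: "comb c = comb c' \<Longrightarrow> s < \<alpha> \<Longrightarrow> t < \<beta> \<Longrightarrow> c s t = c' s t"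
  using comb_eq_0_imp_coeff_0[of "\<lambda>s t. c s t - c' s t"] by (simp add: comb_diff)

definition lower :: "(nat \<Rightarrow> nat \<Rightarrow> 'a) \<Rightarrow> nat \<Rightarrow> nat \<Rightarrow> 'a" where
  "lower c s t = (if s + 1 < \<alpha> then A (s + 1) t * c (s + 1) t else 0)
     + (if t + 1 < \<beta> then B s (t + 1) * c s (t + 1) else 0)"

lemma T_comb: "T *v comb c = comb (lower c)"
proof -
  have "T *v comb c = (\<Sum>s<\<alpha>. \<Sum>t<\<beta>. c s t *s (T *v z s t))"
    by (simp add: comb_def matrix_vector_mult_sum vector_scalar_commute)
  also have "\<dots> = (\<Sum>s<\<alpha>. \<Sum>t<\<beta>. (if s = 0 then 0 else (c s t * A s t) *s z (s - 1) t)
      + (if t = 0 then 0 else (c s t * B s t) *s z s (t - 1)))"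
    by (intro sum.cong refl) (auto simp: T_z vec.scale_right_distrib)
  also have "\<dots> = (\<Sum>s<\<alpha>. \<Sum>t<\<beta>. if s = 0 then 0 else (c s t * A s t) *s z (s - 1) t)
      + (\<Sum>s<\<alpha>. \<Sum>t<\<beta>. if t = 0 then 0 else (c s t * B s t) *s z s (t - 1))"
    by (simp add: sum.distrib)
  also have "(\<Sum>s<\<alpha>. \<Sum>t<\<beta>. if s = 0 then 0 else (c s t * A s t) *s z (s - 1) t)
      = (\<Sum>s<\<alpha>. if s = 0 then 0 else (\<lambda>s'. \<Sum>t<\<beta>. (A (s' + 1) t * c (s' + 1) t) *s z s' t) (s - 1))"
    by (intro sum.cong) (auto simp: mult.commute)
  also have "\<dots> = (\<Sum>s<\<alpha>. if s + 1 < \<alpha> then \<Sum>t<\<beta>. (A (s + 1) t * c (s + 1) t) *s z s t else 0)"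
    by (rule sum_lessThan_shift_down)
  also have "\<dots> = (\<Sum>s<\<alpha>. \<Sum>t<\<beta>. (if s + 1 < \<alpha> then A (s + 1) t * c (s + 1) t else 0) *s z s t)"
    by (intro sum.cong) auto
  also have "(\<Sum>s<\<alpha>. \<Sum>t<\<beta>. if t = 0 then 0 else (c s t * B s t) *s z s (t - 1))
      = (\<Sum>s<\<alpha>. \<Sum>t<\<beta>. if t = 0 then 0 else (\<lambda>t'. (B s (t' + 1) * c s (t' + 1)) *s z s t') (t - 1))"
    by (intro sum.cong) (auto simp: mult.commute)
  also have "\<dots> = (\<Sum>s<\<alpha>. \<Sum>t<\<beta>. if t + 1 < \<beta> then (B s (t + 1) * c s (t + 1)) *s z s t else 0)"
    by (rule sum.cong[OF refl], rule sum_lessThan_shift_down)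
  also have "\<dots> = (\<Sum>s<\<alpha>. \<Sum>t<\<beta>. (if t + 1 < \<beta> then B s (t + 1) * c s (t + 1) else 0) *s z s t)"
    by (intro sum.cong) auto
  finally show ?thesis
    by (simp add: comb_def lower_def vec.scale_left_distrib sum.distrib)
qed

lemma kernel_imp_lower_eq_0:
  assumes "T *v comb c = 0" "s < \<alpha>" "t < \<beta>"
  shows "lower c s t = 0"
  using comb_eq_0_imp_coeff_0[of "lower c"] assms by (simp add: T_comb)

lemma coeff_eq_0_if_lower_and_row_0_eq_0:
  assumes lower: "\<And>s t. s < \<alpha> \<Longrightarrow> t < \<beta> \<Longrightarrow> lower c s t = 0"
    and row_0: "\<And>t. t < \<alpha> \<Longrightarrow> c 0 t = 0"
    and "s < \<alpha>" "t < \<beta>"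
  shows "c s t = 0"
proof (cases "s + t < \<alpha>")
  case True
  then show ?thesis
  proof (induction s arbitrary: t)
    case (Suc s)
    have "A (s + 1) t * c (s + 1) t = lower c s t"
      using Suc.IH[of "t + 1"] Suc.prems by (simp add: lower_def)
    also have "\<dots> = 0"
      using lower Suc.prems rows_le_columns by simp
    finally have "A (s + 1) t * c (s + 1) t = 0" .
    then show ?case
      using A_nonzero[of "s + 1" t] Suc.prems rows_le_columns by simp
  qed (simp add: row_0)
next
  case False
  have "s \<le> \<alpha>"
    using assms(3) by simp
  then have "\<forall>t. s < \<alpha> \<longrightarrow> \<alpha> \<le> s + t \<longrightarrow> t < \<beta> \<longrightarrow> c s t = 0"
  proof (induction s rule: inc_induct)
    case (step s)
    show ?case
    proof (intro allI impI)
      fix t assume t: "s < \<alpha>" "\<alpha> \<le> s + t" "t < \<beta>"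
      then have "lower c s (t - 1) = 0" "0 < t"
        using lower by auto
      moreover have "s + 1 < \<alpha> \<Longrightarrow> c (s + 1) (t - 1) = 0"
        using step.IH t by auto
      ultimately have "B s t * c s t = 0"
        by (simp add: lower_def t split: if_splits)
      then show "c s t = 0"
        using B_nonzero[of t s] t by simp
    qed
  qed simp
  then show ?thesis
    using False assms(3,4) by simp
qed

text \<open>The recursion for \<open>diag_coeff\<close> is exactly the condition that \<open>lower\<close> vanishes
  on the antidiagonal \<open>s + t + 1 = \<theta>\<close>.\<close>

primrec diag_coeff :: "nat \<Rightarrow> nat \<Rightarrow> 'a" where
  "diag_coeff \<theta> 0 = 1"
| "diag_coeff \<theta> (Suc s) = - B s (\<theta> - s) * diag_coeff \<theta> s / A (Suc s) (\<theta> - Suc s)"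

definition kernel_coeff :: "nat \<Rightarrow> nat \<Rightarrow> nat \<Rightarrow> 'a" where
  "kernel_coeff \<theta> s t = (if s + t = \<theta> then diag_coeff \<theta> s else 0)"

definition kernel_vec :: "nat \<Rightarrow> 'a ^ 'm" where
  "kernel_vec \<theta> = comb (kernel_coeff \<theta>)"

lemma kernel_coeff_row_0: "kernel_coeff \<theta> 0 t = (if t = \<theta> then 1 else 0)"
  by (simp add: kernel_coeff_def)

lemma lower_kernel_coeff:
  assumes "\<theta> < \<alpha>" "s < \<alpha>" "t < \<beta>"
  shows "lower (kernel_coeff \<theta>) s t = 0"
proof (cases "s + t + 1 = \<theta>")
  case True
  then have "\<theta> - s = Suc t" "\<theta> - Suc s = t" "A (Suc s) t \<noteq> 0"
    using A_nonzero[of "Suc s" t] assms by auto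
  then show ?thesis
    using True assms rows_le_columns by (simp add: lower_def kernel_coeff_def field_simps)
qed (auto simp: lower_def kernel_coeff_def)

lemma T_kernel_vec: "\<theta> < \<alpha> \<Longrightarrow> T *v kernel_vec \<theta> = 0"
  unfolding kernel_vec_def T_comb
  using comb_cong[of "lower (kernel_coeff \<theta>)" "\<lambda>s t. 0"] lower_kernel_coeff comb_zero by auto

lemma kernel_vec_homogeneous: "kernel_vec \<theta> \<in> homogeneous \<theta>"
  unfolding kernel_vec_def comb_def homogeneous_def
proof (intro vec.span_sum)
  fix s t assume "s \<in> {..<\<alpha>}" "t \<in> {..<\<beta>}"
  then have "s + t = \<theta> \<Longrightarrow> z s t \<in> vec.span {z s t | s t. s < \<alpha> \<and> t < \<beta> \<and> s + t = \<theta>}"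
    by (intro vec.span_base) auto
  then show "kernel_coeff \<theta> s t *s z s t \<in> vec.span {z s t | s t. s < \<alpha> \<and> t < \<beta> \<and> s + t = \<theta>}"
    by (auto simp: kernel_coeff_def vec.span_zero intro: vec.span_scale)
qed

lemma comb_kernel_vecs:
  "(\<Sum>\<theta><\<alpha>. k \<theta> *s kernel_vec \<theta>) = comb (\<lambda>s t. \<Sum>\<theta><\<alpha>. k \<theta> * kernel_coeff \<theta> s t)"
  by (simp add: comb_sum kernel_vec_def)

lemma row_0_comb_kernel_vecs:
  assumes "t < \<alpha>"
  shows "(\<Sum>\<theta><\<alpha>. k \<theta> * kernel_coeff \<theta> 0 t) = k t"
proof -
  have "(\<Sum>\<theta><\<alpha>. k \<theta> * kernel_coeff \<theta> 0 t) = (\<Sum>\<theta><\<alpha>. if \<theta> = t then k \<theta> else 0)"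
    by (intro sum.cong) (auto simp: kernel_coeff_row_0)
  then show ?thesis
    using assms by simp
qed

lemma kernel_expansion:
  assumes "T *v comb c = 0"
  shows "comb c = (\<Sum>\<theta><\<alpha>. c 0 \<theta> *s kernel_vec \<theta>)"
proof -
  let ?d = "\<lambda>s t. c s t - (\<Sum>\<theta><\<alpha>. c 0 \<theta> * kernel_coeff \<theta> s t)"
  have comb_d: "comb ?d = comb c - (\<Sum>\<theta><\<alpha>. c 0 \<theta> *s kernel_vec \<theta>)"
    by (simp add: comb_diff comb_kernel_vecs)
  have T_d: "T *v comb ?d = 0"
    unfolding comb_d using assms T_kernel_vec
    by (simp add: matrix_vector_mult_diff_distrib matrix_vector_mult_sum vector_scalar_commute)
  have "?d s t = 0" if "s < \<alpha>" "t < \<beta>" for s t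
    using coeff_eq_0_if_lower_and_row_0_eq_0[of ?d, OF kernel_imp_lower_eq_0[OF T_d]] that
    by (simp add: row_0_comb_kernel_vecs)
  then have "comb ?d = 0"
    using comb_cong[of ?d "\<lambda>s t. 0"] comb_zero by simp
  then show ?thesis
    using comb_d by simp
qed

lemma kernel_vec_coeff_unique:
  assumes "(\<Sum>\<theta><\<alpha>. k \<theta> *s kernel_vec \<theta>) = (\<Sum>\<theta><\<alpha>. k' \<theta> *s kernel_vec \<theta>)" "\<theta> < \<alpha>"
  shows "k \<theta> = k' \<theta>"
  using comb_eq_imp_coeff_eq[OF assms(1)[unfolded comb_kernel_vecs], of 0 \<theta>] assms(2) rows_le_columns
  by (simp add: row_0_comb_kernel_vecs)

lemma kernel_vec_nonzero:
  assumes "\<theta> < \<alpha>"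
  shows "kernel_vec \<theta> \<noteq> 0"
proof
  assume "kernel_vec \<theta> = 0"
  then have "comb (kernel_coeff \<theta>) = comb (\<lambda>s t. 0)"
    by (simp add: kernel_vec_def comb_zero)
  then show False
    using comb_eq_imp_coeff_eq[of "kernel_coeff \<theta>" "\<lambda>s t. 0" 0 \<theta>] assms rows_le_columns
    by (simp add: kernel_coeff_row_0)
qed

lemma inj_on_kernel_vec: "inj_on kernel_vec {..<\<alpha>}"
proof
  fix \<theta> \<theta>' assume "\<theta> \<in> {..<\<alpha>}" "\<theta>' \<in> {..<\<alpha>}" "kernel_vec \<theta> = kernel_vec \<theta>'"
  then have "kernel_coeff \<theta> 0 \<theta> = kernel_coeff \<theta>' 0 \<theta>"
    using comb_eq_imp_coeff_eq[of _ _ 0 \<theta>] rows_le_columns by (auto simp: kernel_vec_def)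
  then show "\<theta> = \<theta>'"
    by (simp add: kernel_coeff_row_0 split: if_splits)
qed

lemma independent_kernel_vecs: "vec.independent (kernel_vec ` {..<\<alpha>})"
proof (rule vec.independent_if_scalars_zero)
  fix f v assume sum_0: "(\<Sum>x\<in>kernel_vec ` {..<\<alpha>}. f x *s x) = 0" and "v \<in> kernel_vec ` {..<\<alpha>}"
  then obtain \<theta> where "\<theta> < \<alpha>" "v = kernel_vec \<theta>"
    by auto
  moreover have "(\<Sum>\<theta><\<alpha>. f (kernel_vec \<theta>) *s kernel_vec \<theta>) = (\<Sum>\<theta><\<alpha>. 0 *s kernel_vec \<theta>)"
    using sum_0 by (simp add: sum.reindex[OF inj_on_kernel_vec])
  ultimately show "f v = 0"
    using kernel_vec_coeff_unique[of "\<lambda>\<theta>. f (kernel_vec \<theta>)" "\<lambda>_. 0"] by simp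
qed simp

lemma span_kernel_vecs: "vec.span (kernel_vec ` {..<\<alpha>}) = {x. T *v x = 0}"
proof
  show "vec.span (kernel_vec ` {..<\<alpha>}) \<subseteq> {x. T *v x = 0}"
    using T_kernel_vec subspace_matrix_kernel by (intro vec.span_minimal) auto
  show "{x. T *v x = 0} \<subseteq> vec.span (kernel_vec ` {..<\<alpha>})"
  proof
    fix w assume "w \<in> {x. T *v x = 0}"
    moreover obtain c where "w = comb c"
      using ex_comb by blast
    ultimately have "w = (\<Sum>\<theta><\<alpha>. c 0 \<theta> *s kernel_vec \<theta>)"
      using kernel_expansion by simp
    also have "\<dots> \<in> vec.span (kernel_vec ` {..<\<alpha>})"
      by (intro vec.span_sum vec.span_scale) (auto intro: vec.span_base)
    finally show "w \<in> vec.span (kernel_vec ` {..<\<alpha>})" .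
  qed
qed

lemma homogeneous_imp_comb:
  "w \<in> homogeneous \<theta> \<Longrightarrow> \<exists>c. w = comb c \<and> (\<forall>s t. s + t \<noteq> \<theta> \<longrightarrow> c s t = 0)"
  unfolding homogeneous_def
proof (induction rule: vec.span_induct_alt)
  case base
  then show ?case
    using comb_zero by auto
next
  case (step k x y)
  then obtain s t where x: "x = z s t" "s < \<alpha>" "t < \<beta>" "s + t = \<theta>"
    by blast
  from step obtain c where c: "y = comb c" "\<forall>s t. s + t \<noteq> \<theta> \<longrightarrow> c s t = 0"
    by blast
  let ?c = "\<lambda>s' t'. k * (if s' = s \<and> t' = t then 1 else 0) + c s' t'"
  have "k *s x + y = comb ?c"
    using x c by (simp add: comb_add comb_scale comb_delta)
  moreover have "\<forall>s' t'. s' + t' \<noteq> \<theta> \<longrightarrow> ?c s' t' = 0"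
    using c x by auto
  ultimately show ?case
    by blast
qed

lemma kernel_inter_homogeneous:
  assumes "\<theta> < \<alpha>"
  shows "{x. T *v x = 0} \<inter> homogeneous \<theta> = vec.span {kernel_vec \<theta>}"
proof
  show "vec.span {kernel_vec \<theta>} \<subseteq> {x. T *v x = 0} \<inter> homogeneous \<theta>"
    using T_kernel_vec[OF assms] kernel_vec_homogeneous[of \<theta>] subspace_matrix_kernel
    by (intro vec.span_minimal) (auto simp: homogeneous_def intro!: vec.subspace_inter vec.subspace_span)
  show "{x. T *v x = 0} \<inter> homogeneous \<theta> \<subseteq> vec.span {kernel_vec \<theta>}"
  proof
    fix w assume w: "w \<in> {x. T *v x = 0} \<inter> homogeneous \<theta>"
    then obtain c where c: "w = comb c" "\<forall>s t. s + t \<noteq> \<theta> \<longrightarrow> c s t = 0"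
      using homogeneous_imp_comb by blast
    then have "w = (\<Sum>\<theta>'<\<alpha>. c 0 \<theta>' *s kernel_vec \<theta>')"
      using w kernel_expansion by simp
    also have "\<dots> = (\<Sum>\<theta>'<\<alpha>. if \<theta>' = \<theta> then c 0 \<theta> *s kernel_vec \<theta> else 0)"
      using c(2) by (intro sum.cong) auto
    also have "\<dots> = c 0 \<theta> *s kernel_vec \<theta>"
      using assms by simp
    finally show "w \<in> vec.span {kernel_vec \<theta>}"
      by (simp add: vec.span_base vec.span_scale)
  qed
qed

lemma dim_kernel: "vec.dim {x. T *v x = 0} = \<alpha>"
  using vec.dim_span_eq_card_independent[OF independent_kernel_vecs] span_kernel_vecs
    card_image[OF inj_on_kernel_vec] by simp

theorem kernel_graded_basis:
  "vec.dim {x. T *v x = 0} = \<alpha> \<and>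
   (\<exists>x. (\<forall>\<theta><\<alpha>. x \<theta> \<noteq> 0 \<and> x \<theta> \<in> homogeneous \<theta> \<and>
           {x. T *v x = 0} \<inter> homogeneous \<theta> = vec.span {x \<theta>}) \<and>
        vec.span (x ` {..<\<alpha>}) = {x. T *v x = 0})"
  using dim_kernel kernel_vec_nonzero kernel_vec_homogeneous kernel_inter_homogeneous span_kernel_vecs
  by (intro conjI exI[of _ kernel_vec]) auto

end

section \<open>Simple modules of the double\<close>

locale simple_drep =
  fixes n d :: nat and q :: "'a::field" and G X :: "('a,'p::finite) sqmat"
    and e a :: "int \<Rightarrow> ('a,'p) sqmat" and i :: int and h :: "'a^'p"
  assumes drep: "drep n d q G X e a" and simple: "dsimple G X e a"
    and n_pos: "0 < n" and d_le_n: "d \<le> n" and q_nonzero: "q \<noteq> 0"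
    and h_nonzero: "h \<noteq> 0" and e_i_h: "e i *v h = h"
    and ker_X: "{v. X *v v = 0} = vec.span {h}"
begin

lemma e_periodic: "e (l + int n) = e l"
  and a_periodic: "a (l + int n) = a l"
  and G_pow_n: "mpow G n = mat 1"
  and G_X: "G ** X = mat (inverse q) ** (X ** G)"
  and e_e: "e l ** e l' = (if l mod int n = l' mod int n then e l else 0)"
  and e_a: "e (l + 1) ** a l = a l"
  and a_e: "a l ** e l = a l"
  and gam_d: "gam e a l d = 0"
  and gam_G: "m < d \<Longrightarrow> gam e a l m ** G = mat (inverse q ^ m) ** (G ** gam e a l m)"
  and gam_X: "m < d \<Longrightarrow> gam e a l m ** X =
          mat (inverse q ^ m) ** (X ** gam e a (l + 1) m)
          - mat (inverse q ^ m * qint q m) ** gam e a (l + 1) (m - 1)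
          + mat (q powi (l + 1 - int m) * qint q m) ** (G ** gam e a (l + 1) (m - 1))"
  using drep unfolding drep_def by blast+

lemma X_h: "X *v h = 0"
  using ker_X vec.span_base by blast

lemma e_a_mod_eq:
  assumes "l mod int n = l' mod int n"
  shows "e l = e l' \<and> a l = a l'"
proof -
  have "e (l' + int n * k) = e l' \<and> a (l' + int n * k) = a l'" for k :: int
  proof (induction k rule: int_induct[where k = 0])
    case (step1 k)
    then show ?case
      using e_periodic[of "l' + int n * k"] a_periodic[of "l' + int n * k"] by (simp add: algebra_simps)
  next
    case (step2 k)
    then show ?case
      using e_periodic[of "l' + int n * (k - 1)"] a_periodic[of "l' + int n * (k - 1)"]
      by (simp add: algebra_simps)
  qed simp
  moreover obtain k where "l = l' + int n * k"
    using assms by (metis mod_eq_dvd_iff dvdE add_diff_cancel_left' diff_add_cancel add.commute)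
  ultimately show ?thesis
    by simp
qed

definition gh :: "nat \<Rightarrow> 'a ^ 'p" where
  "gh s = gam e a i s *v h"

lemma e_gam: "e (l + int m) ** gam e a l m = gam e a l m"
proof (induction m)
  case (Suc m)
  have "l + int (Suc m) = (l + int m) + 1"
    by simp
  then have "e (l + int (Suc m)) ** gam e a l (Suc m) = (e (l + int m + 1) ** a (l + int m)) ** gam e a l m"
    by (simp only: gam.simps matrix_mul_assoc)
  then show ?case
    by (simp add: e_a)
qed (simp add: e_e)

lemma gh_0: "gh 0 = h"
  by (simp add: gh_def e_i_h)

lemma gh_Suc: "gh (Suc s) = a (i + int s) *v gh s"
  by (simp add: gh_def matrix_vector_mul_assoc)

lemma e_gh_self: "e (i + int s) *v gh s = gh s"
  by (simp add: gh_def matrix_vector_mul_assoc e_gam)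

lemma gh_vanish: "d \<le> s \<Longrightarrow> gh s = 0"
proof -
  have "gam e a l (d + k) = 0" for l k
    by (induction k) (simp_all add: gam_d)
  then show "d \<le> s \<Longrightarrow> gh s = 0"
    by (metis gh_def le_add_diff_inverse matrix_vector_mult_0)
qed

lemma e_gh: "e l *v gh s = (if l mod int n = (i + int s) mod int n then gh s else 0)"
proof (cases "l mod int n = (i + int s) mod int n")
  case True
  then show ?thesis
    using e_a_mod_eq e_gh_self by metis
next
  case False
  then have "e l *v gh s = (e l ** e (i + int s)) *v gh s"
    by (simp add: e_gh_self flip: matrix_vector_mul_assoc)
  then show ?thesis
    using False by (simp add: e_e)
qed

lemma a_gh: "a l *v gh s = (if l mod int n = (i + int s) mod int n then gh (Suc s) else 0)"
proof (cases "l mod int n = (i + int s) mod int n")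
  case True
  then show ?thesis
    using e_a_mod_eq gh_Suc by metis
next
  case False
  then have "a l *v gh s = ((a l ** e l) ** e (i + int s)) *v gh s"
    by (simp add: a_e e_gh_self flip: matrix_vector_mul_assoc)
  then show ?thesis
    using False by (simp add: e_e flip: matrix_mul_assoc)
qed

lemma G_h_eigen: "\<exists>c. G *v h = c *s h"
proof -
  have "G *v (X *v h) = inverse q *s (X *v (G *v h))"
    by (simp only: matrix_vector_mul_assoc G_X)
      (simp add: mat_matrix_vector_mult flip: matrix_vector_mul_assoc)
  then have "G *v h \<in> vec.span {h}"
    using ker_X X_h q_nonzero by auto
  then show ?thesis
    by (auto simp: vec.span_singleton)
qed

lemma G_gh:
  assumes "G *v h = c *s h"
  shows "G *v gh s = (c * q ^ s) *s gh s"
proof (cases "s < d")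
  case True
  have "inverse q ^ s *s (G *v gh s) = gam e a i s *v (G *v h)"
    by (simp only: matrix_vector_mul_assoc gam_G[OF True])
      (simp add: gh_def mat_matrix_vector_mult flip: matrix_vector_mul_assoc)
  also have "\<dots> = c *s gh s"
    by (simp add: assms gh_def vector_scalar_commute)
  finally have "G *v gh s = q ^ s *s (c *s gh s)"
    using scale_power_inverse_cancel[OF q_nonzero] by metis
  then show ?thesis
    by (simp add: vec.scale_scale mult.commute)
qed (simp add: gh_vanish)

lemma G_eigenvalue_nonzero:
  assumes "G *v h = c *s h"
  shows "c \<noteq> 0"
proof
  assume "c = 0"
  have "mpow G k *v h = c ^ k *s h" for k
    by (induction k) (auto simp: assms vector_scalar_commute vec.scale_scale simp flip: matrix_vector_mul_assoc)
  moreover have "h = mpow G n *v h"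
    using G_pow_n by simp
  ultimately have "h = c ^ n *s h"
    by simp
  then show False
    using \<open>c = 0\<close> n_pos h_nonzero by (simp add: power_0_left)
qed

lemma X_gh_Suc: "\<exists>c. X *v gh (Suc s) = c *s gh s"
proof (cases "Suc s < d")
  case True
  obtain c where c: "G *v h = c *s h"
    using G_h_eigen by blast
  let ?k = "inverse q ^ Suc s"
  have "0 = (gam e a (i - 1) (Suc s) ** X) *v h"
    by (simp add: X_h flip: matrix_vector_mul_assoc)
  also have "\<dots> = ?k *s (X *v gh (Suc s)) - (?k * qint q (Suc s)) *s gh s
      + (q powi (i - int (Suc s)) * qint q (Suc s)) *s (G *v gh s)"
    by (simp only: gam_X[OF True])
      (simp add: matrix_vector_mult_add_rdistrib matrix_vector_mult_diff_rdistrib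
        mat_matrix_vector_mult gh_def flip: matrix_vector_mul_assoc)
  finally have "?k *s (X *v gh (Suc s)) = (?k * qint q (Suc s)) *s gh s
      - (q powi (i - int (Suc s)) * qint q (Suc s) * (c * q ^ s)) *s gh s"
    by (simp add: G_gh[OF c] vec.scale_scale algebra_simps eq_diff_eq)
  then have "?k *s (X *v gh (Suc s)) \<in> vec.span {gh s}"
    by (simp add: vec.span_diff vec.span_scale vec.span_base)
  then have "q ^ Suc s *s (?k *s (X *v gh (Suc s))) \<in> vec.span {gh s}"
    by (rule vec.span_scale)
  then have "X *v gh (Suc s) \<in> vec.span {gh s}"
    using scale_power_inverse_cancel[OF q_nonzero] by metis
  then show ?thesis
    by (auto simp: vec.span_singleton)
qed (simp add: gh_vanish)

lemma X_gh_lower: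
  assumes "\<And>s. X *v gh (Suc s) = lam s *s gh s"
  shows "X *v gh s = (if s = 0 then 0 else lam (s - 1) *s gh (s - 1))"
  by (cases s) (simp_all add: gh_0 X_h assms)

lemma X_gh_nonzero:
  assumes "gh s \<noteq> 0" "0 < s" "s < n"
  shows "X *v gh s \<noteq> 0"
proof
  assume "X *v gh s = 0"
  then obtain k where "gh s = k *s h"
    using ker_X by (auto simp: vec.span_singleton)
  moreover have "e (i + int s) *v h = 0"
    using e_gh[of "i + int s" 0] add_mod_eq_imp_eq[of i s n 0] assms n_pos by (auto simp: gh_0)
  ultimately have "gh s = 0"
    using e_gh_self[of s] by (simp add: vector_scalar_commute)
  then show False
    using assms(1) by simp
qed

lemma span_gh: "vec.span (range gh) = UNIV"
proof -
  let ?W = "vec.span (range gh)"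
  obtain c where c: "G *v h = c *s h"
    using G_h_eigen by blast
  have X_gh: "X *v gh s \<in> ?W" for s
  proof (cases s)
    case 0
    then show ?thesis
      by (simp add: gh_0 X_h vec.span_zero)
  next
    case (Suc s')
    then show ?thesis
      using X_gh_Suc[of s'] by (metis rangeI vec.span_base vec.span_scale)
  qed
  have invariant: "\<forall>w\<in>?W. M *v w \<in> ?W" if "\<And>s. M *v gh s \<in> ?W" for M
    using matrix_vector_mult_span_invariant[of "range gh" M] that by auto
  have gh_in_W: "gh s \<in> ?W" for s
    by (simp add: vec.span_base)
  have "\<forall>w\<in>?W. G *v w \<in> ?W"
    by (rule invariant) (simp add: G_gh[OF c] vec.span_scale gh_in_W)
  moreover have "\<forall>w\<in>?W. X *v w \<in> ?W"
    by (rule invariant) (rule X_gh)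
  moreover have "\<forall>w\<in>?W. e l *v w \<in> ?W" for l
    by (rule invariant) (simp add: e_gh gh_in_W vec.span_zero)
  moreover have "\<forall>w\<in>?W. a l *v w \<in> ?W" for l
    by (rule invariant) (simp add: a_gh gh_in_W vec.span_zero)
  ultimately have "?W = {0} \<or> ?W = UNIV"
    using simple vec.subspace_span unfolding dsimple_def by blast
  moreover have "?W \<noteq> {0}"
    using vec.span_base[of h "range gh"] h_nonzero gh_0 by (metis rangeI singletonD)
  ultimately show ?thesis
    by blast
qed

definition gh_len :: nat where
  "gh_len = (LEAST s. gh s = 0)"

lemma gh_len_le_d: "gh_len \<le> d"
  unfolding gh_len_def using gh_vanish by (simp add: Least_le)

lemma gh_eq_0_iff: "gh s = 0 \<longleftrightarrow> gh_len \<le> s"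
proof
  show "gh s = 0 \<Longrightarrow> gh_len \<le> s"
    unfolding gh_len_def by (rule Least_le)
  have "gh gh_len = 0"
    unfolding gh_len_def by (rule LeastI[where k = d]) (simp add: gh_vanish)
  then have "gh (gh_len + k) = 0" for k
    by (induction k) (simp_all add: gh_Suc)
  then show "gh_len \<le> s \<Longrightarrow> gh s = 0"
    by (metis le_add_diff_inverse)
qed

lemma e_gh_below_len:
  assumes "s < gh_len" "s' < gh_len"
  shows "e (i + int s) *v gh s' = (if s = s' then gh s' else 0)"
  using add_mod_eq_imp_eq[of i s n s'] assms gh_len_le_d d_le_n by (auto simp: e_gh)

lemma span_gh_below_len: "vec.span (gh ` {..<gh_len}) = UNIV"
proof -
  have "range gh \<subseteq> insert 0 (gh ` {..<gh_len})"
    using gh_eq_0_iff by (auto simp: not_less[symmetric])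
  then have "vec.span (range gh) \<subseteq> vec.span (gh ` {..<gh_len})"
    using vec.span_mono vec.span_insert_0 by metis
  then show ?thesis
    using span_gh by auto
qed

lemma inj_on_gh_below_len: "inj_on gh {..<gh_len}"
proof
  fix s s' assume "s \<in> {..<gh_len}" "s' \<in> {..<gh_len}" "gh s = gh s'"
  then show "s = s'"
    using e_gh_below_len[of s s] e_gh_below_len[of s s'] gh_eq_0_iff[of s] by (auto split: if_splits)
qed

lemma independent_gh_below_len: "vec.independent (gh ` {..<gh_len})"
proof (rule vec.independent_if_scalars_zero)
  fix f v assume sum_0: "(\<Sum>x\<in>gh ` {..<gh_len}. f x *s x) = 0" and "v \<in> gh ` {..<gh_len}"
  then obtain s0 where s0: "s0 < gh_len" "v = gh s0"
    by auto
  have "0 = e (i + int s0) *v (\<Sum>s<gh_len. f (gh s) *s gh s)"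
    using sum_0 by (simp add: sum.reindex[OF inj_on_gh_below_len])
  also have "\<dots> = (\<Sum>s<gh_len. f (gh s) *s (e (i + int s0) *v gh s))"
    by (simp add: matrix_vector_mult_sum vector_scalar_commute)
  also have "\<dots> = (\<Sum>s<gh_len. if s = s0 then f (gh s) *s gh s else 0)"
    using s0 by (intro sum.cong) (auto simp: e_gh_below_len)
  also have "\<dots> = f v *s v"
    using s0 by simp
  finally show "f v = 0"
    using s0 gh_eq_0_iff[of s0] by simp
qed simp

lemma gh_len_eq_card: "gh_len = CARD('p)"
proof -
  have "CARD('p) = vec.dim (UNIV :: ('a ^ 'p) set)"
    by (rule vec_dim_card[symmetric])
  also have "\<dots> = card (gh ` {..<gh_len})"
    using vec.dim_span_eq_card_independent[OF independent_gh_below_len] span_gh_below_len by simp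
  also have "\<dots> = gh_len"
    using card_image[OF inj_on_gh_below_len] by simp
  finally show ?thesis
    by simp
qed

lemma span_gh_below_card: "vec.span (gh ` {..<CARD('p)}) = UNIV"
  using span_gh_below_len gh_len_eq_card by simp

lemma X_gh_Suc_coeff_nonzero:
  assumes "X *v gh (Suc s) = c *s gh s" "Suc s < CARD('p)"
  shows "c \<noteq> 0"
  using X_gh_nonzero[of "Suc s"] assms gh_eq_0_iff[of "Suc s"] gh_len_eq_card gh_len_le_d d_le_n
  by auto

end

lemma isL_simple_drep:
  fixes X :: "('a::field,'p::finite) sqmat"
  assumes L: "isL n d q u i G X e a" and "0 < n" "d \<le> n" "q \<noteq> 0" "h \<noteq> 0" "X *v h = 0"
  shows "simple_drep n d q G X e a i h"
proof -
  obtain Y where Y: "e i *v Y = Y" "{v. X *v v = 0} = vec.span {Y}"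
    using L unfolding isL_def by blast
  then have h_in: "h \<in> vec.span {Y}"
    using assms(6) by blast
  then obtain k where k: "h = k *s Y"
    by (auto simp: vec.span_singleton)
  then have "Y = inverse k *s h"
    using assms(5) by (auto simp: vec.scale_scale)
  then have "Y \<in> vec.span {h}"
    by (simp add: vec.span_base vec.span_scale)
  then have "vec.span {h} = vec.span {Y}"
    using h_in by (intro equalityI vec.span_minimal) (simp_all add: vec.subspace_span)
  then show ?thesis
    using L assms Y k unfolding isL_def
    by unfold_locales (auto simp: vector_scalar_commute)
qed

section \<open>Tensor products\<close>

lemma vtens_add_left: "vtens (x + y) w = vtens x w + vtens y w"
  by (simp add: vtens_def vec_eq_iff algebra_simps)

lemma vtens_add_right: "vtens v (x + y) = vtens v x + vtens v y"
  by (simp add: vtens_def vec_eq_iff algebra_simps)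

lemma vtens_scale_left: "vtens (k *s x) w = k *s vtens x (w::'a::field^'r)"
  by (simp add: vtens_def vec_eq_iff vector_scalar_mult_def algebra_simps)

lemma vtens_scale_right: "vtens v (k *s x) = k *s vtens (v::'a::field^'p) x"
  by (simp add: vtens_def vec_eq_iff vector_scalar_mult_def algebra_simps)

lemma vtens_zero_left: "vtens 0 w = 0"
  by (simp add: vtens_def vec_eq_iff)

lemma vtens_zero_right: "vtens v 0 = 0"
  by (simp add: vtens_def vec_eq_iff)

lemma kron_mult_vtens: "kron A B *v vtens v w = vtens (A *v v) (B *v (w::'a::field^'r))"
proof -
  have "(vtens (A *v v) (B *v w)) $ (p, r) = (kron A B *v vtens v w) $ (p, r)" for p r
  proof -
    have "(vtens (A *v v) (B *v w)) $ (p, r) = (\<Sum>j\<in>UNIV. A $ p $ j * v $ j) * (\<Sum>l\<in>UNIV. B $ r $ l * w $ l)"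
      by (simp add: vtens_def matrix_vector_mult_def)
    also have "\<dots> = (\<Sum>(j, l)\<in>UNIV \<times> UNIV. (A $ p $ j * v $ j) * (B $ r $ l * w $ l))"
      by (simp add: sum_product sum.cartesian_product)
    also have "\<dots> = (kron A B *v vtens v w) $ (p, r)"
      by (simp add: kron_def vtens_def matrix_vector_mult_def case_prod_beta mult_ac)
    finally show ?thesis .
  qed
  then show ?thesis
    by (simp add: vec_eq_iff)
qed

lemma tensX_mult_vtens:
  "tensX X1 G1 X2 G2 *v vtens v w = vtens (X1 *v v) (G2 *v w) + vtens v (X2 *v (w::'a::field^'r))"
  by (simp add: tensX_def matrix_vector_mult_add_rdistrib kron_mult_vtens)

lemma span_vtens:
  fixes S1 :: "('a::field^'p) set" and S2 :: "('a^'r) set"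
  assumes "vec.span S1 = UNIV" and "vec.span S2 = UNIV"
  shows "vec.span {vtens x y | x y. x \<in> S1 \<and> y \<in> S2} = UNIV"
proof -
  let ?P = "{vtens x y | x y. x \<in> S1 \<and> y \<in> S2}"
  have vtens_left: "vtens v y \<in> vec.span ?P" if "y \<in> S2" for v y
  proof -
    have "v \<in> vec.span S1"
      using assms(1) by simp
    then show ?thesis
    proof (induction rule: vec.span_induct_alt)
      case (step c x v')
      have "vtens x y \<in> vec.span ?P"
        using step that by (intro vec.span_base) blast
      then show ?case
        using step by (simp add: vtens_add_left vtens_scale_left vec.span_add vec.span_scale)
    qed (simp add: vtens_zero_left vec.span_zero)
  qed
  have vtens_in: "vtens v w \<in> vec.span ?P" for v w
  proof -
    have "w \<in> vec.span S2"
      using assms(2) by simp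
    then show ?thesis
    proof (induction rule: vec.span_induct_alt)
      case (step c y w')
      then show ?case
        using vtens_left[of y v] by (simp add: vtens_add_right vtens_scale_right vec.span_add vec.span_scale)
    qed (simp add: vtens_zero_right vec.span_zero)
  qed
  have "axis pr (1::'a) = vtens (axis (fst pr) 1) (axis (snd pr) 1)" for pr :: "'p \<times> 'r"
    by (auto simp: vtens_def axis_def vec_eq_iff prod_eq_iff)
  then have "cart_basis \<subseteq> vec.span ?P"
    using vtens_in by (auto simp: cart_basis_def)
  then have "vec.span cart_basis \<subseteq> vec.span ?P"
    by (rule vec.span_minimal) (rule vec.subspace_span)
  then show ?thesis
    by (simp add: top.extremum_unique)
qed

lemma vtens_basis:
  fixes f :: "nat \<Rightarrow> 'a::field ^ 'p" and g :: "nat \<Rightarrow> 'a ^ 'r"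
  assumes "vec.span (f ` {..<CARD('p)}) = UNIV" and "vec.span (g ` {..<CARD('r)}) = UNIV"
  shows "inj_on (\<lambda>(s, t). vtens (f s) (g t)) ({..<CARD('p)} \<times> {..<CARD('r)})"
    and "vec.independent ((\<lambda>(s, t). vtens (f s) (g t)) ` ({..<CARD('p)} \<times> {..<CARD('r)}))"
    and "vec.span ((\<lambda>(s, t). vtens (f s) (g t)) ` ({..<CARD('p)} \<times> {..<CARD('r)})) = UNIV"
proof -
  have "(\<lambda>(s, t). vtens (f s) (g t)) ` ({..<CARD('p)} \<times> {..<CARD('r)})
      = {vtens x y | x y. x \<in> f ` {..<CARD('p)} \<and> y \<in> g ` {..<CARD('r)}}"
    by auto
  then show span: "vec.span ((\<lambda>(s, t). vtens (f s) (g t)) ` ({..<CARD('p)} \<times> {..<CARD('r)})) = UNIV"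
    using span_vtens[OF assms] by simp
  have card: "card ({..<CARD('p)} \<times> {..<CARD('r)}) = CARD('p \<times> 'r)"
    by (simp add: card_cartesian_product)
  show "inj_on (\<lambda>(s, t). vtens (f s) (g t)) ({..<CARD('p)} \<times> {..<CARD('r)})"
    and "vec.independent ((\<lambda>(s, t). vtens (f s) (g t)) ` ({..<CARD('p)} \<times> {..<CARD('r)}))"
    using spanning_family_card_eq_dim_imp_basis[OF _ card span] by simp_all
qed

lemma tensor_grid_lowering:
  fixes G1 X1 :: "('a::field,'p::finite) sqmat" and e1 a1 :: "int \<Rightarrow> ('a,'p) sqmat"
    and G2 X2 :: "('a,'r::finite) sqmat" and e2 a2 :: "int \<Rightarrow> ('a,'r) sqmat"
  assumes "simple_drep n d q G1 X1 e1 a1 i h" and "simple_drep n d q G2 X2 e2 a2 j h'"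
    and "CARD('p) \<le> CARD('r)"
  obtains A B where "grid_lowering (\<lambda>s t. vtens (gam e1 a1 i s *v h) (gam e2 a2 j t *v h'))
    (tensX X1 G1 X2 G2) A B CARD('p) CARD('r)"
proof -
  interpret M1: simple_drep n d q G1 X1 e1 a1 i h
    by fact
  interpret M2: simple_drep n d q G2 X2 e2 a2 j h'
    by fact
  obtain c where c: "G2 *v h' = c *s h'"
    using M2.G_h_eigen by blast
  obtain lam1 where lam1: "\<And>s. X1 *v M1.gh (Suc s) = lam1 s *s M1.gh s"
    using M1.X_gh_Suc by metis
  obtain lam2 where lam2: "\<And>t. X2 *v M2.gh (Suc t) = lam2 t *s M2.gh t"
    using M2.X_gh_Suc by metis
  define A where "A = (\<lambda>s t. lam1 (s - 1) * (c * q ^ t))"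
  define B where "B = (\<lambda>(s::nat) t. lam2 (t - 1))"
  have "tensX X1 G1 X2 G2 *v vtens (M1.gh s) (M2.gh t)
      = (if s = 0 then 0 else A s t *s vtens (M1.gh (s - 1)) (M2.gh t))
        + (if t = 0 then 0 else B s t *s vtens (M1.gh s) (M2.gh (t - 1)))" for s t
    by (simp add: A_def B_def tensX_mult_vtens M1.X_gh_lower[OF lam1] M2.X_gh_lower[OF lam2]
        M2.G_gh[OF c] vtens_scale_left vtens_scale_right vtens_zero_left vtens_zero_right
        vec.scale_scale mult_ac)
  moreover have "A s t \<noteq> 0" if "0 < s" "s < CARD('p)" for s t
    using M1.X_gh_Suc_coeff_nonzero[OF lam1, of "s - 1"] M2.G_eigenvalue_nonzero[OF c]
      M1.q_nonzero that
    by (simp add: A_def)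
  moreover have "B s t \<noteq> 0" if "0 < t" "t < CARD('r)" for s t
    using M2.X_gh_Suc_coeff_nonzero[OF lam2, of "t - 1"] that by (simp add: B_def)
  ultimately have "grid_lowering (\<lambda>s t. vtens (M1.gh s) (M2.gh t)) (tensX X1 G1 X2 G2) A B
      CARD('p) CARD('r)"
    using assms(3) vtens_basis[OF M1.span_gh_below_card M2.span_gh_below_card]
    by unfold_locales simp_all
  then show thesis
    by (rule that[folded M1.gh_def M2.gh_def])
qed

theorem mainTheorem11:
  fixes n d :: nat and q :: "'a::alg_closed_field" and u i v j :: int
    and G1 X1 :: "('a,'p::finite) sqmat" and e1 a1 :: "int \<Rightarrow> ('a,'p) sqmat"
    and G2 X2 :: "('a,'r::finite) sqmat" and e2 a2 :: "int \<Rightarrow> ('a,'r) sqmat"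
    and h :: "'a^'p" and h' :: "'a^'r"
  assumes "d \<ge> 2" and "d dvd n" and "of_nat n \<noteq> (0::'a)"
    and "q ^ d = 1" and "\<forall>m. 0 < m \<and> m < d \<longrightarrow> q ^ m \<noteq> 1"
    and L1: "isL n d q u i G1 X1 e1 a1"
    and L2: "isL n d q v j G2 X2 e2 a2"
    and "CARD('p) \<le> CARD('r)"
    and "h \<noteq> 0" and "X1 *v h = 0"
    and "h' \<noteq> 0" and "X2 *v h' = 0"
  shows
    "let \<alpha> = CARD('p); \<beta> = CARD('r);
         z = (\<lambda>s t. vtens (gam e1 a1 i s *v h) (gam e2 a2 j t *v h'));
         B = (\<lambda>(s, t). z s t) ` ({..<\<alpha>} \<times> {..<\<beta>});
         Hom = (\<lambda>\<theta>. vec.span {z s t | s t. s < \<alpha> \<and> t < \<beta> \<and> s + t = \<theta>});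
         K = {x. tensX X1 G1 X2 G2 *v x = 0}
     in inj_on (\<lambda>(s, t). z s t) ({..<\<alpha>} \<times> {..<\<beta>}) \<and>
        vec.independent B \<and> vec.span B = UNIV \<and>
        vec.dim K = \<alpha> \<and>
        (\<exists>x :: nat \<Rightarrow> 'a^('p \<times> 'r).
           (\<forall>\<theta><\<alpha>. x \<theta> \<noteq> 0 \<and> x \<theta> \<in> Hom \<theta> \<and> K \<inter> Hom \<theta> = vec.span {x \<theta>}) \<and>
           vec.span (x ` {..<\<alpha>}) = K)"
proof -
  have n_pos: "0 < n"
    using assms(3) by (cases n) auto
  have d_le_n: "d \<le> n"
    using assms(2) n_pos by (simp add: dvd_imp_le)
  have q_nonzero: "q \<noteq> 0"
    using assms(1,4) by (cases "q = 0") (auto simp: power_0_left)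
  obtain A B where "grid_lowering (\<lambda>s t. vtens (gam e1 a1 i s *v h) (gam e2 a2 j t *v h'))
      (tensX X1 G1 X2 G2) A B CARD('p) CARD('r)"
    by (rule tensor_grid_lowering[OF isL_simple_drep[OF L1 n_pos d_le_n q_nonzero assms(9,10)]
          isL_simple_drep[OF L2 n_pos d_le_n q_nonzero assms(11,12)] assms(8)])
  then interpret grid_lowering "\<lambda>s t. vtens (gam e1 a1 i s *v h) (gam e2 a2 j t *v h')"
    "tensX X1 G1 X2 G2" A B "CARD('p)" "CARD('r)" .
  show ?thesis
    using z_inj z_independent z_span kernel_graded_basis[unfolded homogeneous_def]
    unfolding Let_def by (intro conjI) auto
qed

end
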